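(* Let a nondegenerate triangle be circumscribed about a central conic one of whose foci coincides with the circumcenter of the triangle. Then the triangle is acute if and only if the conic is an ellipse, and it is obtuse if and only if the conic is a hyperbola.
   Context: A central conic is a non-degenerate ellipse or hyperbola. A triangle is circumscribed about a conic if each of its three sidelines is tangent to the conic. *)

theory Defs
  imports "HOL-Analysis.Analysis"
begin

text \<open>A central conic in the plane, given in canonical form with respect to
  a centre c and an orthonormal frame (u, v), with semi-axes a, b > 0.
  If ell is True it is the ellipse  x^2/a^2 + y^2/b^2 = 1,
  otherwise the hyperbola  x^2/a^2 - y^2/b^2 = 1,
  where x = (P - c) . u and y = (P - c) . v.\<close>

definition central_conic :: "bool \<Rightarrow> real^2 \<Rightarrow> real^2 \<Rightarrow> real^2 \<Rightarrow> real \<Rightarrow> real \<Rightarrow> bool" where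
  "central_conic ell c u v a b \<longleftrightarrow>
     norm u = 1 \<and> norm v = 1 \<and> inner u v = 0 \<and> a > 0 \<and> b > 0"

definition conic_form :: "bool \<Rightarrow> real^2 \<Rightarrow> real^2 \<Rightarrow> real^2 \<Rightarrow> real \<Rightarrow> real \<Rightarrow> real^2 \<Rightarrow> real" where
  "conic_form ell c u v a b P =
     (inner (P - c) u)^2 / a^2 + (if ell then 1 else -1) * (inner (P - c) v)^2 / b^2"

definition conic_points :: "bool \<Rightarrow> real^2 \<Rightarrow> real^2 \<Rightarrow> real^2 \<Rightarrow> real \<Rightarrow> real \<Rightarrow> (real^2) set" where
  "conic_points ell c u v a b = {P. conic_form ell c u v a b P = 1}"

definition conic_grad :: "bool \<Rightarrow> real^2 \<Rightarrow> real^2 \<Rightarrow> real^2 \<Rightarrow> real \<Rightarrow> real \<Rightarrow> real^2 \<Rightarrow> real^2" where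
  "conic_grad ell c u v a b P =
     (2 * inner (P - c) u / a^2) *\<^sub>R u
     + ((if ell then 1 else -1) * 2 * inner (P - c) v / b^2) *\<^sub>R v"

definition conic_foci :: "bool \<Rightarrow> real^2 \<Rightarrow> real^2 \<Rightarrow> real^2 \<Rightarrow> real \<Rightarrow> real \<Rightarrow> (real^2) set" where
  "conic_foci ell c u v a b =
     (if ell then
        (if b \<le> a then {c + sqrt (a^2 - b^2) *\<^sub>R u, c - sqrt (a^2 - b^2) *\<^sub>R u}
         else {c + sqrt (b^2 - a^2) *\<^sub>R v, c - sqrt (b^2 - a^2) *\<^sub>R v})
      else {c + sqrt (a^2 + b^2) *\<^sub>R u, c - sqrt (a^2 + b^2) *\<^sub>R u})"

definition tangent_line :: "bool \<Rightarrow> real^2 \<Rightarrow> real^2 \<Rightarrow> real^2 \<Rightarrow> real \<Rightarrow> real \<Rightarrow> real^2 \<Rightarrow> real^2 \<Rightarrow> bool" where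
  "tangent_line ell c u v a b P Q \<longleftrightarrow>
     (\<exists>X. (\<exists>t::real. X = P + t *\<^sub>R (Q - P)) \<and> X \<in> conic_points ell c u v a b \<and>
          inner (conic_grad ell c u v a b X) (Q - P) = 0)"

definition circumscribed :: "real^2 \<Rightarrow> real^2 \<Rightarrow> real^2 \<Rightarrow> bool \<Rightarrow> real^2 \<Rightarrow> real^2 \<Rightarrow> real^2 \<Rightarrow> real \<Rightarrow> real \<Rightarrow> bool" where
  "circumscribed A B C ell c u v a b \<longleftrightarrow>
     tangent_line ell c u v a b A B \<and> tangent_line ell c u v a b B C \<and> tangent_line ell c u v a b C A"

definition is_circumcenter :: "real^2 \<Rightarrow> real^2 \<Rightarrow> real^2 \<Rightarrow> real^2 \<Rightarrow> bool" where
  "is_circumcenter Z A B C \<longleftrightarrow> dist Z A = dist Z B \<and> dist Z B = dist Z C"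

definition tri_angle :: "real^2 \<Rightarrow> real^2 \<Rightarrow> real^2 \<Rightarrow> real" where
  "tri_angle A B C = arccos (inner (A - B) (C - B) / (norm (A - B) * norm (C - B)))"

definition acute_triangle :: "real^2 \<Rightarrow> real^2 \<Rightarrow> real^2 \<Rightarrow> bool" where
  "acute_triangle A B C \<longleftrightarrow>
     tri_angle B A C < pi/2 \<and> tri_angle A B C < pi/2 \<and> tri_angle A C B < pi/2"

definition obtuse_triangle :: "real^2 \<Rightarrow> real^2 \<Rightarrow> real^2 \<Rightarrow> bool" where
  "obtuse_triangle A B C \<longleftrightarrow>
     tri_angle B A C > pi/2 \<or> tri_angle A B C > pi/2 \<or> tri_angle A C B > pi/2"

end

theory Submission
  imports Defs
begin

text \<open>Let \<open>G = 2c - F\<close> be the second focus. For every tangent line the product of the signed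
  distances of \<open>F\<close> and \<open>G\<close> from it is the same constant \<open>k\<close>: the squared minor semi-axis for
  an ellipse, and \<open>-b\<^sup>2\<close> for a hyperbola, whose foci lie on opposite sides of every tangent.
  With \<open>F\<close> the circumcenter \<open>Z\<close>, for a side \<open>AB\<close> this product equals \<open>|AB|\<^sup>2 (M - Z) \<bullet> (M - G)\<close>,
  \<open>M\<close> the midpoint of \<open>AB\<close>. Hence the three side midpoints have equal power \<open>k\<close> with respect to
  the circle on diameter \<open>ZG\<close>, which forces \<open>G\<close> to be the orthocenter \<open>H\<close> and
  \<open>4k = R\<^sup>2 - ZH\<^sup>2 = 8 R\<^sup>2 cos \<alpha> cos \<beta> cos \<gamma>\<close>. So \<open>k\<close> is positive exactly for acute
  triangles and negative exactly for obtuse ones.\<close>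

text \<open>For \<open>x = X - P\<close> and \<open>y = Y - P\<close> this is \<open>|d|\<^sup>2\<close> times the product of the signed
  distances of \<open>X\<close> and \<open>Y\<close> from the line through \<open>P\<close> with direction \<open>d\<close>.\<close>

definition perp_prod :: "real^2 \<Rightarrow> real^2 \<Rightarrow> real^2 \<Rightarrow> real" where
  "perp_prod d x y = inner d d * inner x y - inner d x * inner d y"

definition cross2 :: "real^2 \<Rightarrow> real^2 \<Rightarrow> real" where
  "cross2 x y = x$1 * y$2 - x$2 * y$1"

lemma inner_real2: "inner (x::real^2) y = x$1 * y$1 + x$2 * y$2"
  by (simp add: inner_vec_def sum_2)

lemma cross2_square: "(cross2 x y)^2 = inner x x * inner y y - (inner x y)^2"
  unfolding cross2_def inner_real2 by algebra

lemma collinear_iff_cross2_eq_0: "collinear {0, x, y} \<longleftrightarrow> cross2 x y = 0"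
proof -
  have "cross2 x y = 0 \<longleftrightarrow> inner x x * inner y y - (inner x y)^2 = 0"
    by (simp add: cross2_square[symmetric])
  also have "\<dots> \<longleftrightarrow> \<bar>inner x y\<bar>^2 = (norm x * norm y)^2"
    by (auto simp add: power_mult_distrib power2_norm_eq_inner)
  also have "\<dots> \<longleftrightarrow> \<bar>inner x y\<bar> = norm x * norm y"
    using power2_eq_iff_nonneg[of "\<bar>inner x y\<bar>" "norm x * norm y"] by simp
  finally show ?thesis
    by (simp add: norm_cauchy_schwarz_equal)
qed

lemma orthogonal_cross2_nonzero_eq_0:
  fixes w x y :: "real^2"
  assumes "cross2 x y \<noteq> 0" "inner w x = 0" "inner w y = 0"
  shows "w = 0"
proof -
  have "cross2 x y * w$1 = y$2 * inner w x - x$2 * inner w y"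
    "cross2 x y * w$2 = x$1 * inner w y - y$1 * inner w x"
    unfolding cross2_def inner_real2 by algebra+
  then show ?thesis
    using assms by (simp add: vec_eq_iff forall_2)
qed

lemma noncollinear_cross2_nonzero:
  fixes A B C :: "real^2"
  assumes "\<not> collinear {A, B, C}"
  shows "cross2 (B - A) (C - A) \<noteq> 0"
  using assms collinear_3[of B A C]
  by (simp add: collinear_iff_cross2_eq_0 insert_commute)

lemma orthogonal_noncollinear_eq_0:
  fixes w A B C :: "real^2"
  assumes "\<not> collinear {A, B, C}" "inner w (B - A) = 0" "inner w (C - A) = 0"
  shows "w = 0"
  using orthogonal_cross2_nonzero_eq_0 noncollinear_cross2_nonzero assms by blast

lemma inner_orthonormal_expand:
  fixes u v w z :: "real^2"
  assumes "norm u = 1" "norm v = 1" "inner u v = 0"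
  shows "inner w z = inner w u * inner z u + inner w v * inner z v"
proof -
  have uu: "inner u u = 1" and vv: "inner v v = 1"
    using assms(1,2) by (simp_all add: norm_eq_1)
  define e where "e = w - inner w u *\<^sub>R u - inner w v *\<^sub>R v"
  have "cross2 u v \<noteq> 0"
    using cross2_square[of u v] uu vv assms(3) by auto
  moreover have "inner e u = 0" "inner e v = 0"
    using uu vv assms(3) by (simp_all add: e_def inner_diff_left inner_commute[of v u])
  ultimately have "e = 0"
    by (rule orthogonal_cross2_nonzero_eq_0)
  then have "w = inner w u *\<^sub>R u + inner w v *\<^sub>R v"
    by (simp add: e_def algebra_simps)
  then have "inner w z = inner (inner w u *\<^sub>R u + inner w v *\<^sub>R v) z"
    by simp
  then show ?thesis
    by (simp only: inner_add_left inner_scaleR_left inner_commute[of u z] inner_commute[of v z])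
qed

lemma perp_prod_shift: "perp_prod d (x + t *\<^sub>R d) (y + t *\<^sub>R d) = perp_prod d x y"
  by (simp add: perp_prod_def inner_add_right inner_add_left inner_commute algebra_simps)

lemma perp_prod_orthonormal:
  fixes u v d x y :: "real^2"
  assumes "norm u = 1" "norm v = 1" "inner u v = 0"
  shows "perp_prod d x y =
    ((inner d u)^2 + (inner d v)^2) * (inner x u * inner y u + inner x v * inner y v)
    - (inner d u * inner x u + inner d v * inner x v) * (inner d u * inner y u + inner d v * inner y v)"
  unfolding perp_prod_def
  by (subst (1 2 3 4) inner_orthonormal_expand[OF assms]) (simp add: power2_eq_square)

text \<open>Canonical coordinates: tangency point \<open>(x, y)\<close>, direction \<open>(d1, d2)\<close>, foci \<open>(\<plusminus>f, 0)\<close>;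
  \<open>s = 1\<close> for the ellipse and \<open>s = -1\<close> for the hyperbola.\<close>

lemma tangent_focal_product_canonical:
  fixes x y d1 d2 f a b s :: real
  assumes "a \<noteq> 0" "b \<noteq> 0" "s^2 = 1"
    and "x^2/a^2 + s*y^2/b^2 = 1" "2*x/a^2*d1 + s*2*y/b^2*d2 = 0" "f^2 = a^2 - s*b^2"
  shows "(d1^2 + d2^2) * ((f - x) * (- f - x) + (- y) * (- y))
      - (d1 * (f - x) + d2 * (- y)) * (d1 * (- f - x) + d2 * (- y)) = s * b^2 * (d1^2 + d2^2)"
proof -
  have conic: "x^2 * b^2 + s * y^2 * a^2 = a^2 * b^2"
    using assms(1,2,4) by (simp add: field_simps)
  have "x * d1 * b^2 + s * y * d2 * a^2 = (2*x/a^2*d1 + s*2*y/b^2*d2) * (a^2 * b^2) / 2"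
    using assms(1,2) by (simp add: field_simps)
  with assms(5) have tangent: "x * d1 * b^2 + s * y * d2 * a^2 = 0"
    by simp
  from conic tangent show ?thesis
    using assms(1-3,6) by algebra
qed

definition focal_tangent_product :: "bool \<Rightarrow> real \<Rightarrow> real \<Rightarrow> real" where
  "focal_tangent_product ell a b = (if ell then (min a b)^2 else - (b^2))"

lemma perp_prod_tangent_foci_on_u_axis:
  assumes conic: "central_conic ell c u v a b" and tangent: "tangent_line ell c u v a b P Q"
    and f: "f^2 = a^2 - (if ell then 1 else -1) * b^2"
  shows "perp_prod (Q - P) (c + f *\<^sub>R u - P) (c - f *\<^sub>R u - P)
    = (if ell then 1 else -1) * b^2 * inner (Q - P) (Q - P)"
proof -
  define s :: real where "s = (if ell then 1 else -1)"
  define d where "d = Q - P"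
  from conic have u: "norm u = 1" and v: "norm v = 1" and uv: "inner u v = 0" and "a > 0" "b > 0"
    unfolding central_conic_def by auto
  have uu: "inner u u = 1"
    using u by (simp add: norm_eq_1)
  from tangent obtain X t where X: "X = P + t *\<^sub>R d" and on: "conic_form ell c u v a b X = 1"
    and tan: "inner (conic_grad ell c u v a b X) d = 0"
    unfolding tangent_line_def conic_points_def d_def by auto
  define x y where "x = inner (X - c) u" and "y = inner (X - c) v"
  have coords: "inner (c + f *\<^sub>R u - X) u = f - x" "inner (c + f *\<^sub>R u - X) v = - y"
      "inner (c - f *\<^sub>R u - X) u = - f - x" "inner (c - f *\<^sub>R u - X) v = - y"
    using uu uv by (simp_all add: x_def y_def inner_diff_left inner_add_left algebra_simps)
  have "a \<noteq> 0" "b \<noteq> 0" "s^2 = 1"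
    using \<open>a > 0\<close> \<open>b > 0\<close> by (simp_all add: s_def)
  moreover have "x^2/a^2 + s*y^2/b^2 = 1"
    using on by (simp add: conic_form_def x_def y_def s_def)
  moreover have "2*x/a^2 * inner d u + s*2*y/b^2 * inner d v = 0"
    using tan by (simp add: conic_grad_def inner_add_left inner_commute[of u d] inner_commute[of v d]
        x_def[symmetric] y_def[symmetric] s_def[symmetric])
  moreover have "f^2 = a^2 - s*b^2"
    using f by (simp add: s_def)
  ultimately have canonical: "((inner d u)^2 + (inner d v)^2) * ((f - x) * (- f - x) + (- y) * (- y))
      - (inner d u * (f - x) + inner d v * (- y)) * (inner d u * (- f - x) + inner d v * (- y))
      = s * b^2 * ((inner d u)^2 + (inner d v)^2)"
    by (rule tangent_focal_product_canonical)
  have "perp_prod d (c + f *\<^sub>R u - P) (c - f *\<^sub>R u - P) = perp_prod d (c + f *\<^sub>R u - X) (c - f *\<^sub>R u - X)"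
    using perp_prod_shift[of d "c + f *\<^sub>R u - X" t "c - f *\<^sub>R u - X"] by (simp add: X algebra_simps)
  also have "\<dots> = s * b^2 * ((inner d u)^2 + (inner d v)^2)"
    unfolding perp_prod_orthonormal[OF u v uv] coords by (rule canonical)
  also have "(inner d u)^2 + (inner d v)^2 = inner d d"
    using inner_orthonormal_expand[OF u v uv, of d d] by (simp add: power2_eq_square)
  finally show ?thesis
    by (simp add: s_def d_def)
qed

lemma tangent_line_ellipse_swap:
  "tangent_line True c u v a b P Q = tangent_line True c v u b a P Q"
  by (simp add: tangent_line_def conic_points_def conic_form_def conic_grad_def add.commute)

lemma conic_foci_cases:
  assumes conic: "central_conic ell c u v a b" and focus: "F \<in> conic_foci ell c u v a b"
  obtains (on_u) f where "F = c + f *\<^sub>R u" "f^2 = a^2 - (if ell then 1 else -1) * b^2" "ell \<longrightarrow> b \<le> a"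
    | (on_v) f where "ell" "a < b" "F = c + f *\<^sub>R v" "f^2 = b^2 - a^2"
proof (cases ell)
  case True
  have "a > 0" "b > 0"
    using conic by (simp_all add: central_conic_def)
  show ?thesis
  proof (cases "b \<le> a")
    case True
    then have "a^2 - b^2 \<ge> 0"
      using \<open>b > 0\<close> by (simp add: power_mono)
    with focus \<open>ell\<close> True show ?thesis
      using on_u[of "sqrt (a^2 - b^2)"] on_u[of "- sqrt (a^2 - b^2)"] by (auto simp: conic_foci_def)
  next
    case False
    then have "b^2 - a^2 \<ge> 0"
      using \<open>a > 0\<close> by (simp add: power_mono)
    with focus \<open>ell\<close> False show ?thesis
      using on_v[of "sqrt (b^2 - a^2)"] on_v[of "- sqrt (b^2 - a^2)"] by (auto simp: conic_foci_def)
  qed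
next
  case False
  with focus show ?thesis
    using on_u[of "sqrt (a^2 + b^2)"] on_u[of "- sqrt (a^2 + b^2)"] by (auto simp: conic_foci_def)
qed

lemma perp_prod_tangent_foci:
  assumes conic: "central_conic ell c u v a b" and tangent: "tangent_line ell c u v a b P Q"
    and focus: "F \<in> conic_foci ell c u v a b"
  shows "perp_prod (Q - P) (F - P) (2 *\<^sub>R c - F - P) = focal_tangent_product ell a b * inner (Q - P) (Q - P)"
proof -
  have other_focus: "2 *\<^sub>R c - (c + f *\<^sub>R w) = c - f *\<^sub>R w" for f w
    by (simp add: scaleR_2 algebra_simps)
  from conic focus show ?thesis
  proof (cases rule: conic_foci_cases)
    case on_u
    then show ?thesis
      using perp_prod_tangent_foci_on_u_axis[OF conic tangent on_u(2)]
      by (auto simp: other_focus focal_tangent_product_def min_def)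
  next
    case on_v
    have "central_conic True c v u b a" "tangent_line True c v u b a P Q"
      using conic tangent on_v(1) tangent_line_ellipse_swap
      by (auto simp: central_conic_def inner_commute)
    from perp_prod_tangent_foci_on_u_axis[OF this] on_v show ?thesis
      by (simp add: other_focus focal_tangent_product_def)
  qed
qed

lemma perp_prod_chord:
  fixes Z A B G :: "real^2"
  assumes "dist Z A = dist Z B"
  shows "perp_prod (B - A) (Z - A) (G - A)
    = inner (B - A) (B - A) * inner (midpoint A B - Z) (midpoint A B - G)"
proof -
  have "inner (Z - A) (Z - A) = inner (Z - B) (Z - B)"
    using assms by (simp add: dist_norm flip: power2_norm_eq_inner)
  then show ?thesis
    unfolding perp_prod_def midpoint_def inner_real2 vector_minus_component vector_add_component
      vector_scaleR_component real_scaleR_def inverse_eq_divide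
    by algebra
qed

text \<open>\<open>(M - Z) \<bullet> (M - G)\<close> is the power of \<open>M\<close> with respect to the circle on diameter \<open>ZG\<close>;
  equal powers at two side midpoints put \<open>G\<close> on an altitude.\<close>

lemma midpoint_products_eq_imp_orthocenter:
  fixes Z A B C G :: "real^2"
  assumes "\<not> collinear {A, B, C}" "is_circumcenter Z A B C"
    and "inner (midpoint A B - Z) (midpoint A B - G) = inner (midpoint B C - Z) (midpoint B C - G)"
    and "inner (midpoint B C - Z) (midpoint B C - G) = inner (midpoint C A - Z) (midpoint C A - G)"
  shows "G = A + B + C - 2 *\<^sub>R Z"
proof -
  define w where "w = G - (A + B + C - 2 *\<^sub>R Z)"
  have radii: "inner (Z - A) (Z - A) = inner (Z - B) (Z - B)" "inner (Z - B) (Z - B) = inner (Z - C) (Z - C)"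
    using assms(2) by (simp_all add: is_circumcenter_def dist_norm flip: power2_norm_eq_inner)
  note coordinates = w_def midpoint_def inner_real2 vector_minus_component vector_add_component
    vector_scaleR_component real_scaleR_def inverse_eq_divide
  have "inner w (B - A) = 0"
    using radii assms(4) unfolding coordinates by algebra
  moreover have "inner w (C - A) = 0"
    using radii assms(3) unfolding coordinates by algebra
  ultimately have "w = 0"
    by (rule orthogonal_noncollinear_eq_0[OF assms(1)])
  then show ?thesis
    by (simp add: w_def)
qed

lemma gram_det_real2:
  fixes x y z :: "real^2"
  shows "inner x x * inner y y * inner z z + 2 * inner x y * inner y z * inner z x
    - inner x x * (inner y z)^2 - inner y y * (inner z x)^2 - inner z z * (inner x y)^2 = 0"
  unfolding inner_real2 by algebra

text \<open>Euler's \<open>ZH\<^sup>2 = R\<^sup>2 (1 - 8 cos \<alpha> cos \<beta> cos \<gamma>)\<close> for the circumcenter \<open>Z = 0\<close> and the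
  orthocenter \<open>H = a + b + c\<close>, multiplied through by the squared side lengths.\<close>

lemma euler_identity_real2:
  fixes a b c :: "real^2"
  assumes "inner b b = inner a a" "inner c c = inner a a"
  shows "(inner a a - inner (a + b + c) (a + b + c))
      * (inner (b - a) (b - a) * inner (c - b) (c - b) * inner (a - c) (a - c))
    = 8 * inner a a * (inner (b - a) (c - a) * inner (a - b) (c - b) * inner (a - c) (b - c))"
proof -
  define r al be ga where "r = inner a a" and "al = inner b c" and "be = inner c a" and "ga = inner a b"
  have gram: "r^3 + 2*al*be*ga - r*(al^2 + be^2 + ga^2) = 0"
    using gram_det_real2[of a b c] assms
    by (simp add: r_def al_def be_def ga_def power3_eq_cube algebra_simps)
  have expand: "inner (a + b + c) (a + b + c) = 3*r + 2*(al + be + ga)"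
      "inner (b - a) (b - a) = 2*r - 2*ga" "inner (c - b) (c - b) = 2*r - 2*al"
      "inner (a - c) (a - c) = 2*r - 2*be"
      "inner (b - a) (c - a) = r + al - be - ga" "inner (a - b) (c - b) = r + be - al - ga"
      "inner (a - c) (b - c) = r + ga - al - be"
    using assms by (simp_all add: r_def al_def be_def ga_def inner_add_left inner_add_right
      inner_diff_left inner_diff_right inner_commute algebra_simps)
  show ?thesis
    unfolding expand r_def[symmetric] using gram by algebra
qed

lemma perp_prod_sides_circumcenter:
  fixes A B C Z G :: "real^2" and k :: real
  assumes noncollinear: "\<not> collinear {A, B, C}" and circumcenter: "is_circumcenter Z A B C"
    and AB: "perp_prod (B - A) (Z - A) (G - A) = k * inner (B - A) (B - A)"
    and BC: "perp_prod (C - B) (Z - B) (G - B) = k * inner (C - B) (C - B)"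
    and CA: "perp_prod (A - C) (Z - C) (G - C) = k * inner (A - C) (A - C)"
  shows "k * (inner (B - A) (B - A) * inner (C - B) (C - B) * inner (A - C) (A - C))
    = 2 * (dist Z A)^2 * (inner (B - A) (C - A) * inner (A - B) (C - B) * inner (A - C) (B - C))"
proof -
  have "B - A \<noteq> 0" "C - B \<noteq> 0" "A - C \<noteq> 0"
    using noncollinear by (auto simp: insert_commute)
  have radii: "dist Z A = dist Z B" "dist Z B = dist Z C" "dist Z C = dist Z A"
    using circumcenter by (simp_all add: is_circumcenter_def)
  have mid: "inner (midpoint A B - Z) (midpoint A B - G) = k"
      "inner (midpoint B C - Z) (midpoint B C - G) = k"
      "inner (midpoint C A - Z) (midpoint C A - G) = k"
    using AB BC CA perp_prod_chord[OF radii(1), of G] perp_prod_chord[OF radii(2), of G]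
      perp_prod_chord[OF radii(3), of G] \<open>B - A \<noteq> 0\<close> \<open>C - B \<noteq> 0\<close> \<open>A - C \<noteq> 0\<close>
    by (simp_all add: mult.commute)
  then have orthocenter: "G = A + B + C - 2 *\<^sub>R Z"
    by (intro midpoint_products_eq_imp_orthocenter[OF noncollinear circumcenter]) simp_all
  define a b c where "a = A - Z" and "b = B - Z" and "c = C - Z"
  have radii_abc: "inner b b = inner a a" "inner c c = inner a a"
    using radii by (simp_all add: a_def b_def c_def dist_norm norm_minus_commute flip: power2_norm_eq_inner)
  have "4 * k = inner c c - inner (a + b + c) (a + b + c)"
    unfolding mid(1)[symmetric] orthocenter a_def b_def c_def midpoint_def inner_real2
      vector_minus_component vector_add_component vector_scaleR_component real_scaleR_def
      inverse_eq_divide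
    by algebra
  then have four_k: "inner a a - inner (a + b + c) (a + b + c) = 4 * k"
    using radii_abc(2) by simp
  have sides: "b - a = B - A" "c - b = C - B" "a - c = A - C" "c - a = C - A" "a - b = A - B"
      "b - c = B - C"
    by (simp_all add: a_def b_def c_def)
  have radius: "inner a a = (dist Z A)^2"
    by (simp add: a_def dist_norm norm_minus_commute flip: power2_norm_eq_inner)
  show ?thesis
    using euler_identity_real2[OF radii_abc, unfolded four_k sides, unfolded radius] by algebra
qed

lemma mult3_sign_if_pairwise_sums_pos:
  fixes p q r :: real
  assumes "p + q > 0" "q + r > 0" "r + p > 0"
  shows "(p * q * r > 0 \<longleftrightarrow> p > 0 \<and> q > 0 \<and> r > 0) \<and> (p * q * r < 0 \<longleftrightarrow> p < 0 \<or> q < 0 \<or> r < 0)"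
proof -
  consider "p > 0" "q > 0" "r > 0" | "p \<le> 0" "q > 0" "r > 0" | "q \<le> 0" "p > 0" "r > 0"
    | "r \<le> 0" "p > 0" "q > 0"
    using assms by linarith
  then show ?thesis
    by cases (auto simp: zero_less_mult_iff mult_less_0_iff)
qed

lemma tri_angle_pi_half_iff:
  assumes "A \<noteq> B" "C \<noteq> B"
  shows "(tri_angle A B C < pi/2 \<longleftrightarrow> inner (A - B) (C - B) > 0)
    \<and> (tri_angle A B C > pi/2 \<longleftrightarrow> inner (A - B) (C - B) < 0)"
proof -
  define q where "q = inner (A - B) (C - B) / (norm (A - B) * norm (C - B))"
  have norms: "norm (A - B) * norm (C - B) > 0"
    using assms by simp
  then have "\<bar>q\<bar> \<le> 1"
    using Cauchy_Schwarz_ineq2[of "A - B" "C - B"] by (simp add: q_def abs_divide divide_le_eq)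
  then have "tri_angle A B C < pi/2 \<longleftrightarrow> q > 0" "tri_angle A B C > pi/2 \<longleftrightarrow> q < 0"
    using arccos_less_mono[of q 0] arccos_less_mono[of 0 q] by (simp_all add: tri_angle_def q_def)
  moreover have "q > 0 \<longleftrightarrow> inner (A - B) (C - B) > 0" "q < 0 \<longleftrightarrow> inner (A - B) (C - B) < 0"
    using norms by (simp_all add: q_def zero_less_divide_iff divide_less_0_iff)
  ultimately show ?thesis
    by simp
qed

lemma acute_obtuse_triangle_iff_sign:
  fixes A B C :: "real^2"
  assumes "\<not> collinear {A, B, C}"
  defines "p \<equiv> inner (B - A) (C - A) * inner (A - B) (C - B) * inner (A - C) (B - C)"
  shows "(acute_triangle A B C \<longleftrightarrow> p > 0) \<and> (obtuse_triangle A B C \<longleftrightarrow> p < 0)"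
proof -
  have "A \<noteq> B" "B \<noteq> C" "C \<noteq> A"
    using assms(1) by (auto simp: insert_commute)
  have "inner (B - A) (C - A) + inner (A - B) (C - B) = inner (B - A) (B - A)"
      "inner (A - B) (C - B) + inner (A - C) (B - C) = inner (C - B) (C - B)"
      "inner (A - C) (B - C) + inner (B - A) (C - A) = inner (A - C) (A - C)"
    by (simp_all add: inner_real2 algebra_simps)
  then have "inner (B - A) (C - A) + inner (A - B) (C - B) > 0"
      "inner (A - B) (C - B) + inner (A - C) (B - C) > 0"
      "inner (A - C) (B - C) + inner (B - A) (C - A) > 0"
    using \<open>A \<noteq> B\<close> \<open>B \<noteq> C\<close> \<open>C \<noteq> A\<close> by simp_all
  from mult3_sign_if_pairwise_sums_pos[OF this] show ?thesis
    using tri_angle_pi_half_iff[of B A C] tri_angle_pi_half_iff[of A B C] tri_angle_pi_half_iff[of A C B]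
      \<open>A \<noteq> B\<close> \<open>B \<noteq> C\<close> \<open>C \<noteq> A\<close>
    by (auto simp: acute_triangle_def obtuse_triangle_def p_def)
qed

theorem corollary2p2:
  fixes A B C c u v F :: "real^2" and a b :: real and ell :: bool
  assumes "\<not> collinear {A, B, C}"
    and "central_conic ell c u v a b"
    and "circumscribed A B C ell c u v a b"
    and "F \<in> conic_foci ell c u v a b"
    and "is_circumcenter F A B C"
  shows "(acute_triangle A B C \<longleftrightarrow> ell) \<and> (obtuse_triangle A B C \<longleftrightarrow> \<not> ell)"
proof -
  define k where "k = focal_tangent_product ell a b"
  define G where "G = 2 *\<^sub>R c - F"
  define p where "p = inner (B - A) (C - A) * inner (A - B) (C - B) * inner (A - C) (B - C)"
  define N where "N = inner (B - A) (B - A) * inner (C - B) (C - B) * inner (A - C) (A - C)"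
  have tangent_side: "perp_prod (Q - P) (F - P) (G - P) = k * inner (Q - P) (Q - P)"
    if "tangent_line ell c u v a b P Q" for P Q
    using perp_prod_tangent_foci[OF assms(2) that assms(4)] by (simp add: k_def G_def)
  have "tangent_line ell c u v a b A B" "tangent_line ell c u v a b B C" "tangent_line ell c u v a b C A"
    using assms(3) by (simp_all add: circumscribed_def)
  from perp_prod_sides_circumcenter[OF assms(1,5) tangent_side[OF this(1)] tangent_side[OF this(2)]
    tangent_side[OF this(3)]]
  have "k * N = 2 * (dist F A)^2 * p"
    by (simp add: N_def p_def)
  moreover have "A \<noteq> B" "B \<noteq> C" "C \<noteq> A"
    using assms(1) by (auto simp: insert_commute)
  moreover from this have "N > 0"
    by (simp add: N_def mult_pos_pos)
  moreover have "dist F A > 0"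
    using assms(5) \<open>A \<noteq> B\<close> by (auto simp: is_circumcenter_def)
  ultimately have "k > 0 \<longleftrightarrow> p > 0" "k < 0 \<longleftrightarrow> p < 0"
    by (metis zero_less_mult_iff mult_less_0_iff zero_less_power zero_less_numeral not_less_iff_gr_or_eq)+
  moreover have "k > 0 \<longleftrightarrow> ell" "k < 0 \<longleftrightarrow> \<not> ell"
    using assms(2) by (auto simp: k_def focal_tangent_product_def central_conic_def)
  ultimately show ?thesis
    using acute_obtuse_triangle_iff_sign[OF assms(1)] by (simp add: p_def)
qed

end
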